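(* Let $\pi_1,\pi_2:\mathbb P^3\dashrightarrow\mathbb P^2$ be linear projections with centers $c_1\neq c_2$ and fundamental matrix $F$. Under the bijection between lines $\ell_F\subset\mathbb P(\mathbb C^{3\times3})$ through $F$ and quadrics $Q\subset\mathbb P^3$ through $c_1,c_2$, the quadric $Q$ corresponding to $\ell_F$ is obtained as follows: for any $M\in\ell_F$ with $M\neq F$, $Q$ is cut out by the equation $\pi_2(p)^\top M\pi_1(p)=0$.
   Context: Work over $\mathbb C$. A linear projection $\pi:\mathbb P^3\dashrightarrow\mathbb P^2$ is $p\mapsto Ap$, $A\in\mathbb C^{3\times4}$ of rank three, with center spanning $\ker A$. The fundamental matrix of $(\pi_1,\pi_2)$ is the rank-two $F\in\mathbb P(\mathbb C^{3\times3})$ with $\pi_2(p)^\top F\pi_1(p)=0$ for all $p\in\mathbb P^3$. The claim includes that this $Q$ does not depend on the choice of $M\in\ell_F\setminus\{F\}$ and that $\ell_F\mapsto Q$ is a bijection onto the quadrics through $c_1,c_2$. *)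

theory Defs
  imports "HOL-Analysis.Analysis"
begin

text \<open>Complex 3x3 matrices are elements of complex^3^3; a projection is a
complex^4^3 matrix (3 rows, 4 columns) acting by matrix-vector product.\<close>

definition mlin :: "complex \<Rightarrow> complex^'n^'m \<Rightarrow> complex \<Rightarrow> complex^'n^'m \<Rightarrow> complex^'n^'m" where
  "mlin a X b Y = (\<chi> i j. a * X$i$j + b * Y$i$j)"

text \<open>The (complex) linear span of a single matrix F, i.e. the point [F] plus 0.\<close>
definition mspan1 :: "complex^'n^'m \<Rightarrow> (complex^'n^'m) set" where
  "mspan1 F = {X. \<exists>a. X = (\<chi> i j. a * F$i$j)}"

text \<open>Affine cone of the projective line through [F] and [M] (span of F and M).\<close>
definition mline :: "complex^'n^'m \<Rightarrow> complex^'n^'m \<Rightarrow> (complex^'n^'m) set" where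
  "mline F M = {X. \<exists>a b. X = mlin a F b M}"

definition line_through :: "complex^'n^'m \<Rightarrow> (complex^'n^'m) set \<Rightarrow> bool" where
  "line_through F L \<longleftrightarrow> (\<exists>M. M \<notin> mspan1 F \<and> L = mline F M)"

definition bil :: "complex^'m \<Rightarrow> complex^'n^'m \<Rightarrow> complex^'n \<Rightarrow> complex" where
  "bil u M v = (\<Sum>i\<in>UNIV. \<Sum>j\<in>UNIV. u$i * M$i$j * v$j)"

definition qM :: "complex^4^3 \<Rightarrow> complex^4^3 \<Rightarrow> complex^3^3 \<Rightarrow> complex^4 \<Rightarrow> complex" where
  "qM A1 A2 M p = bil (A2 *v p) M (A1 *v p)"

definition quad_form :: "complex^4^4 \<Rightarrow> complex^4 \<Rightarrow> complex" where
  "quad_form S p = (\<Sum>i\<in>UNIV. \<Sum>j\<in>UNIV. S$i$j * p$i * p$j)"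

text \<open>A quadric in P^3 is represented by a nonzero quadratic form on C^4
 (up to a nonzero scalar, see same_quadric).\<close>
definition is_quadric :: "(complex^4 \<Rightarrow> complex) \<Rightarrow> bool" where
  "is_quadric q \<longleftrightarrow> (\<exists>S. \<forall>p. q p = quad_form S p) \<and> (\<exists>p. q p \<noteq> 0)"

definition same_quadric :: "(complex^4 \<Rightarrow> complex) \<Rightarrow> (complex^4 \<Rightarrow> complex) \<Rightarrow> bool" where
  "same_quadric q r \<longleftrightarrow> (\<exists>t. t \<noteq> 0 \<and> (\<forall>p. q p = t * r p))"

end

theory Submission
  imports Defs
begin

text \<open>
  Take a basis of C^4 whose first two vectors are c1 and c2. In these coordinates
  pi1 and pi2 become, up to invertible changes of coordinates B1, B2 of the image
  planes, the coordinate projections forgetting x1 and x2 respectively, so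
  M \<mapsto> qM M is the composite of the invertible congruence M \<mapsto> B2^T M B1
  with the explicit map std_form. By comparing coefficients, std_form has a
  one-dimensional kernel (spanned by the skew matrix E23 - E32), and its image consists of all
  quadratic forms without x1^2 and x2^2 terms, i.e. those vanishing at c1 and c2.
  Hence M \<mapsto> qM M is a linear surjection onto the quadratic forms through c1, c2
  whose kernel is the line spanned by F; any such map identifies the projective
  lines through [F] with the points of the projectivised image.
\<close>

section \<open>Bilinear and quadratic forms\<close>

lemma bil_eq_sum_matrix_vector: "bil u M v = (\<Sum>i\<in>UNIV. u$i * (M *v v)$i)"
  by (simp add: bil_def matrix_vector_mult_def sum_distrib_left mult.assoc)

lemma sum_matrix_vector_mult_transpose:
  fixes B :: "'a::comm_ring_1^'n^'m"
  shows "(\<Sum>i\<in>UNIV. (B *v u)$i * w$i) = (\<Sum>k\<in>UNIV. u$k * (transpose B *v w)$k)"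
proof -
  have "(\<Sum>i\<in>UNIV. (B *v u)$i * w$i) = (\<Sum>i\<in>UNIV. \<Sum>k\<in>UNIV. u$k * (B$i$k * w$i))"
    by (simp add: matrix_vector_mult_def sum_distrib_left sum_distrib_right mult_ac)
  also have "\<dots> = (\<Sum>k\<in>UNIV. \<Sum>i\<in>UNIV. u$k * (B$i$k * w$i))"
    by (rule sum.swap)
  finally show ?thesis
    by (simp add: matrix_vector_mult_def transpose_def sum_distrib_left)
qed

lemma bil_matrix_vector_mult: "bil (B *v u) M (C *v v) = bil u (transpose B ** M ** C) v"
  unfolding bil_eq_sum_matrix_vector
  by (simp add: sum_matrix_vector_mult_transpose matrix_vector_mul_assoc matrix_mul_assoc)

lemma bil_mlin: "bil u (mlin a X b Y) v = a * bil u X v + b * bil u Y v"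
  by (simp add: bil_def mlin_def sum_distrib_left sum.distrib algebra_simps)

lemma quad_form_eq_bil: "quad_form S p = bil p S p"
  by (simp add: quad_form_def bil_def mult_ac)

lemma quad_form_matrix_vector_mult: "quad_form S (P *v x) = quad_form (transpose P ** S ** P) x"
  by (simp add: quad_form_eq_bil bil_matrix_vector_mult)

lemma quad_form_axis: "quad_form S (axis i 1) = S$i$i"
proof -
  have "x * (if b then 1 else 0) = (if b then x else 0)" for x :: complex and b by simp
  then show ?thesis by (simp add: quad_form_def axis_def)
qed

lemma qM_eq_quad_form: "qM A1 A2 M p = quad_form (transpose A2 ** M ** A1) p"
  by (simp add: qM_def quad_form_eq_bil bil_matrix_vector_mult[symmetric])

lemma qM_mlin: "qM A1 A2 (mlin a X b Y) p = a * qM A1 A2 X p + b * qM A1 A2 Y p"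
  by (simp add: qM_def bil_mlin)

section \<open>Lines through F\<close>

lemma mem_mline_self: "M \<in> mline F M"
  unfolding mline_def by (intro CollectI exI[of _ 0] exI[of _ 1]) (simp add: mlin_def vec_eq_iff)

lemma mlin_notin_mspan1_coeff_nonzero:
  assumes "mlin a F b M \<notin> mspan1 F"
  shows "b \<noteq> 0"
proof
  assume "b = 0"
  then have "mlin a F b M = (\<chi> i j. a * F$i$j)" by (simp add: mlin_def)
  with assms show False unfolding mspan1_def by blast
qed

lemma mline_mlin:
  fixes F M :: "complex^'n^'m"
  assumes "b \<noteq> 0"
  shows "mline F (mlin a F b M) = mline F M"
proof
  show "mline F (mlin a F b M) \<subseteq> mline F M"
  proof
    fix X assume "X \<in> mline F (mlin a F b M)"
    then obtain x y where "X = mlin x F y (mlin a F b M)" unfolding mline_def by blast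
    then have "X = mlin (x + y * a) F (y * b) M" by (simp add: mlin_def vec_eq_iff algebra_simps)
    then show "X \<in> mline F M" unfolding mline_def by blast
  qed
next
  show "mline F M \<subseteq> mline F (mlin a F b M)"
  proof
    fix X assume "X \<in> mline F M"
    then obtain x y where "X = mlin x F y M" unfolding mline_def by blast
    then have "X = mlin (x - y * a / b) F (y / b) (mlin a F b M)"
      using assms by (simp add: mlin_def vec_eq_iff field_simps)
    then show "X \<in> mline F (mlin a F b M)" unfolding mline_def by blast
  qed
qed

lemma line_through_eq_mline:
  assumes "line_through F L" and "M \<in> L - mspan1 F"
  shows "L = mline F M"
proof -
  obtain M0 where L: "L = mline F M0" using assms(1) unfolding line_through_def by blast
  then obtain a b where M: "M = mlin a F b M0" using assms(2) unfolding mline_def by blast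
  then have "b \<noteq> 0" using assms(2) mlin_notin_mspan1_coeff_nonzero by blast
  then show ?thesis using L M mline_mlin by metis
qed

locale kernel_line_map =
  fixes \<Phi> :: "complex^'n^'m \<Rightarrow> complex^4 \<Rightarrow> complex" and F :: "complex^'n^'m"
  assumes \<Phi>_mlin: "\<Phi> (mlin a X b Y) p = a * \<Phi> X p + b * \<Phi> Y p"
    and \<Phi>_F: "\<Phi> F p = 0"
    and kernel_subset_mspan1: "(\<And>p. \<Phi> M p = 0) \<Longrightarrow> M \<in> mspan1 F"
begin

lemma \<Phi>_nonzero: "M \<notin> mspan1 F \<Longrightarrow> \<exists>p. \<Phi> M p \<noteq> 0"
  using kernel_subset_mspan1 by blast

lemma \<Phi>_mlin_F: "\<Phi> (mlin a F b M) p = b * \<Phi> M p"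
  by (simp add: \<Phi>_mlin \<Phi>_F)

lemma same_quadric_on_line:
  assumes "line_through F L" and "M \<in> L - mspan1 F" and "M' \<in> L - mspan1 F"
  shows "same_quadric (\<Phi> M') (\<Phi> M)"
proof -
  have "M' \<in> mline F M" using assms line_through_eq_mline by blast
  then obtain a b where M': "M' = mlin a F b M" unfolding mline_def by blast
  then have "b \<noteq> 0" using assms(3) mlin_notin_mspan1_coeff_nonzero by blast
  then show ?thesis unfolding same_quadric_def M' \<Phi>_mlin_F by blast
qed

lemma line_eq_if_same_quadric:
  assumes "line_through F L" "line_through F L'" "M \<in> L - mspan1 F" "M' \<in> L' - mspan1 F"
    and "same_quadric (\<Phi> M) (\<Phi> M')"
  shows "L = L'"
proof -
  obtain t where t: "t \<noteq> 0" "\<And>p. \<Phi> M p = t * \<Phi> M' p"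
    using assms(5) unfolding same_quadric_def by blast
  then have "\<Phi> (mlin 1 M (- t) M') p = 0" for p by (simp add: \<Phi>_mlin)
  then obtain k where "mlin 1 M (- t) M' = (\<chi> i j. k * F$i$j)"
    using kernel_subset_mspan1 unfolding mspan1_def by blast
  then have "M = mlin k F t M'" by (simp add: mlin_def vec_eq_iff algebra_simps)
  then show ?thesis
    using assms(1-4) line_through_eq_mline mline_mlin t(1) by metis
qed

lemma exists_line_through_with_quadric:
  assumes "\<And>p. q p = \<Phi> M p" and "\<exists>p. q p \<noteq> 0"
  shows "\<exists>L. line_through F L \<and> (\<exists>M\<in>L - mspan1 F. same_quadric q (\<Phi> M))"
proof -
  have "M \<notin> mspan1 F"
  proof
    assume "M \<in> mspan1 F"
    then obtain a where "M = mlin 0 F a F" unfolding mspan1_def by (auto simp: mlin_def)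
    then show False using assms by (simp add: \<Phi>_mlin_F \<Phi>_F)
  qed
  moreover have "same_quadric q (\<Phi> M)"
    unfolding same_quadric_def using assms(1) by (intro exI[of _ 1]) simp
  ultimately show ?thesis
    unfolding line_through_def using mem_mline_self by blast
qed

end

lemma matrix_vector_mult_axis: "A *v axis k 1 = column k (A :: 'a::comm_semiring_1^'n^'m)"
  by (simp add: matrix_vector_mult_def column_def axis_def vec_eq_iff if_distrib cong: if_cong)

lemma matrix_mult_scaled_middle:
  fixes X Y Z :: "'a::comm_ring_1^'n^'n"
  shows "X ** (\<chi> i j. a * Y$i$j) ** Z = (\<chi> i j. a * (X ** Y ** Z)$i$j)"
  by (simp add: vec_eq_iff matrix_matrix_mult_def sum_distrib_left sum_distrib_right algebra_simps)

lemma rank_zero: "rank (0::'a::field^'n^'m) = 0"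
  unfolding row_rank_def_gen rows_def by (simp add: row_def zero_vec_def[symmetric])

lemma surj_matrix_vector_mult_if_rank:
  fixes A :: "'a::field^'n^'m"
  assumes "rank A = CARD('m)"
  shows "surj ((*v) A)"
proof -
  define r where "r i = row i A" for i
  have R: "rows A = range r" unfolding rows_def r_def by auto
  have "vec.dim (rows A) \<le> card (rows A)"
    by (rule vec.dim_le_card) (auto simp: R intro: vec.span_base)
  moreover have "card (rows A) \<le> CARD('m)" unfolding R by (rule card_image_le) simp
  ultimately have card_rows: "card (rows A) = vec.dim (rows A)" "card (rows A) = CARD('m)"
    using assms unfolding row_rank_def_gen by simp_all
  have "finite (rows A)" unfolding R by simp
  then have "vec.independent (rows A)"
    by (rule vec.card_eq_dim[OF order_refl card_rows(1), THEN iffD2]) (rule vec.span_superset)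
  note indep = this[unfolded vec.independent_explicit, THEN conjunct2, rule_format]
  have inj: "inj r"
    using card_rows(2) unfolding R by (intro eq_card_imp_inj_on) simp_all
  have "\<forall>c. (\<Sum>i\<in>UNIV. c i *s row i A) = 0 \<longrightarrow> (\<forall>i. c i = 0)"
  proof (intro allI impI)
    fix c :: "'m \<Rightarrow> 'a" and i
    assume "(\<Sum>i\<in>UNIV. c i *s row i A) = 0"
    then have "(\<Sum>i\<in>UNIV. c i *s r i) = 0" by (simp add: r_def)
    then have "(\<Sum>v\<in>rows A. c (inv r v) *s v) = 0"
      unfolding R by (simp add: sum.reindex[OF inj] inv_f_f[OF inj])
    from indep[OF this, of "r i"] show "c i = 0" by (simp add: R inv_f_f[OF inj])
  qed
  then have "\<exists>B :: 'a^'m^'n. A ** B = mat 1"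
    by (simp add: matrix_right_invertible_independent_rows)
  then show ?thesis by (simp add: matrix_right_invertible_surjective)
qed

lemma invertible_if_surj:
  fixes A :: "'a::field^'n^'n"
  assumes "surj ((*v) A)"
  shows "invertible A"
  using assms by (simp add: invertible_right_inverse matrix_right_invertible_surjective)

lemma exists_invertible_with_columns:
  fixes c1 c2 :: "'a::field^4"
  assumes "c2 \<noteq> 0" and "\<forall>k. c1 \<noteq> k *s c2"
  shows "\<exists>P :: 'a^4^4. invertible P \<and> column 1 P = c1 \<and> column 2 P = c2"
proof -
  have "c1 \<noteq> c2" using assms(2)[rule_format, of 1] by auto
  have "c1 \<notin> vec.span {c2}" using assms(2) by (auto simp: vec.span_singleton)
  then have indep: "vec.independent {c1, c2}"
    using assms(1) \<open>c1 \<noteq> c2\<close> by (simp add: vec.independent_insert)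
  define T where "T = vec.extend_basis {c1, c2}"
  have sub: "{c1, c2} \<subseteq> T" and indep_T: "vec.independent T" and span_T: "vec.span T = UNIV"
    unfolding T_def using vec.extend_basis_superset vec.independent_extend_basis vec.span_extend_basis indep
    by blast+
  have "finite T" using indep_T vec.finiteI_independent by blast
  have "card T = vec.dim (UNIV :: ('a^4) set)"
    using vec.basis_card_eq_dim[of T UNIV] indep_T span_T by simp
  then have "card T = 4" using vec_dim_card[where 'a='a and 'n=4] by simp
  then have "card (T - {c1, c2}) = 2"
    using sub \<open>finite T\<close> \<open>c1 \<noteq> c2\<close> by (simp add: card_Diff_subset)
  then obtain u v where "T - {c1, c2} = {u, v}" by (auto simp: card_2_iff)
  then have T: "T = {c1, c2, u, v}" using sub by blast
  define w :: "4 \<Rightarrow> 'a^4" where "w j = (if j = 1 then c1 else if j = 2 then c2 else if j = 3 then u else v)" for j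
  define P :: "'a^4^4" where "P = (\<chi> i j. w j $ i)"
  have column_P: "column j P = w j" for j by (simp add: P_def column_def vec_eq_iff)
  have "columns P = range w" unfolding columns_def column_P by auto
  also have "\<dots> = T" unfolding T UNIV_4 by (auto simp: w_def)
  finally have "invertible P"
    using span_T by (simp add: invertible_right_inverse matrix_right_invertible_span_columns)
  then show ?thesis using column_P by (auto simp: w_def)
qed

lemma matrix_vector_mult_omit_zero_column:
  fixes A :: "'a::comm_semiring_1^'n^'m" and \<sigma> :: "'k::finite \<Rightarrow> 'n"
  assumes "bij_betw \<sigma> UNIV (UNIV - {k})" and "column k A = 0"
  shows "A *v x = (\<chi> i j. A$i$\<sigma> j) *v (\<chi> j. x$\<sigma> j)"
proof -
  have "A$i$k = 0" for i using arg_cong[OF assms(2), of "\<lambda>v. v$i"] by (simp add: column_def)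
  then have "(A *v x)$i = (\<Sum>l\<in>UNIV - {k}. A$i$l * x$l)" for i
    unfolding matrix_vector_mult_def by (simp add: sum.remove[of UNIV k])
  also have "\<dots> i = (\<Sum>j\<in>UNIV. A$i$\<sigma> j * x$\<sigma> j)" for i
    by (rule sum.reindex_bij_betw[OF assms(1), symmetric])
  finally show ?thesis by (simp add: matrix_vector_mult_def vec_eq_iff)
qed

lemma projection_normal_form:
  fixes A :: "'a::field^'n^'m" and P :: "'a^'n^'n" and \<sigma> :: "'m \<Rightarrow> 'n"
  assumes "surj ((*v) A)" and "invertible P" and "A *v column k P = 0"
    and "bij_betw \<sigma> UNIV (UNIV - {k})"
  shows "\<exists>B. invertible B \<and> (\<forall>x. A *v (P *v x) = B *v (\<chi> j. x$\<sigma> j))"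
proof -
  define B :: "'a^'m^'m" where "B = (\<chi> i j. (A ** P)$i$\<sigma> j)"
  have "column k (A ** P) = A *v column k P"
    by (simp add: column_def matrix_matrix_mult_def matrix_vector_mult_def vec_eq_iff)
  then have AP: "A *v (P *v x) = B *v (\<chi> j. x$\<sigma> j)" for x
    unfolding B_def matrix_vector_mul_assoc
    using matrix_vector_mult_omit_zero_column[OF assms(4)] assms(3) by metis
  obtain P' where "P ** P' = mat 1" using assms(2) invertible_def by blast
  then have "A *v p = B *v (\<chi> j. (P' *v p)$\<sigma> j)" for p
    by (metis AP matrix_vector_mul_assoc matrix_vector_mul_lid)
  then have "surj ((*v) B)" using assms(1) by (metis surj_def)
  then show ?thesis using AP invertible_if_surj by blast
qed

lemma congruence_cancel:
  fixes B1 B2 M M' :: "'a::field^'n^'n"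
  assumes "invertible B1" "invertible B2" and "transpose B2 ** M ** B1 = transpose B2 ** M' ** B1"
  shows "M = M'"
proof -
  obtain B1' B2' where B1': "B1 ** B1' = mat 1" and B2': "B2 ** B2' = mat 1"
    using assms(1,2) invertible_def by blast
  have B2'_t: "transpose B2' ** transpose B2 = mat 1"
    using B2' by (metis matrix_transpose_mul transpose_mat)
  have "transpose B2' ** (transpose B2 ** M'' ** B1) ** B1'
      = (transpose B2' ** transpose B2) ** M'' ** (B1 ** B1')" for M''
    by (simp add: matrix_mul_assoc)
  then have "M'' = transpose B2' ** (transpose B2 ** M'' ** B1) ** B1'" for M''
    by (simp add: B1' B2'_t matrix_mul_lid matrix_mul_rid)
  then show ?thesis using assms(3) by metis
qed

lemma congruence_surj:
  fixes B1 B2 N :: "'a::field^'n^'n"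
  assumes "invertible B1" "invertible B2"
  shows "\<exists>M. transpose B2 ** M ** B1 = N"
proof -
  obtain B1' B2' where B1': "B1' ** B1 = mat 1" and B2': "B2' ** B2 = mat 1"
    using assms invertible_def by blast
  have B2'_t: "transpose B2 ** transpose B2' = mat 1"
    using B2' by (metis matrix_transpose_mul transpose_mat)
  have "transpose B2 ** (transpose B2' ** N ** B1') ** B1
      = (transpose B2 ** transpose B2') ** N ** (B1' ** B1)"
    by (simp add: matrix_mul_assoc)
  then have "transpose B2 ** (transpose B2' ** N ** B1') ** B1 = N"
    by (simp add: B1' B2'_t matrix_mul_lid matrix_mul_rid)
  then show ?thesis by blast
qed

section \<open>The coordinate projections with centres e1 and e2\<close>

definition skip1 :: "3 \<Rightarrow> 4" where "skip1 j = (if j = 1 then 2 else if j = 2 then 3 else 4)"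

definition skip2 :: "3 \<Rightarrow> 4" where "skip2 j = (if j = 1 then 1 else if j = 2 then 3 else 4)"

lemma bij_skip1: "bij_betw skip1 UNIV (UNIV - {1})"
  unfolding bij_betw_def inj_on_def UNIV_3 UNIV_4 by (auto simp: skip1_def)

lemma bij_skip2: "bij_betw skip2 UNIV (UNIV - {2})"
  unfolding bij_betw_def inj_on_def UNIV_3 UNIV_4 by (auto simp: skip2_def)

text \<open>qM for the coordinate projections forgetting x1 and x2.\<close>

definition std_form :: "complex^3^3 \<Rightarrow> complex^4 \<Rightarrow> complex" where
  "std_form N x = bil (\<chi> j. x$skip2 j) N (\<chi> j. x$skip1 j)"

lemma std_form_expand: "std_form N x =
     N$1$1 * x$1 * x$2 + N$1$2 * x$1 * x$3 + N$1$3 * x$1 * x$4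
   + N$2$1 * x$3 * x$2 + N$2$2 * x$3 * x$3 + N$2$3 * x$3 * x$4
   + N$3$1 * x$4 * x$2 + N$3$2 * x$4 * x$3 + N$3$3 * x$4 * x$4"
  by (simp add: std_form_def bil_def sum_3 skip1_def skip2_def algebra_simps)

lemma std_form_kernel:
  assumes "\<And>x. std_form N x = 0"
  shows "\<exists>k. \<forall>i j. N$i$j = (if i = 2 \<and> j = 3 then k else if i = 3 \<and> j = 2 then - k else 0)"
proof -
  define pt :: "complex \<Rightarrow> complex \<Rightarrow> complex \<Rightarrow> complex \<Rightarrow> complex^4" where
    "pt a b c d = (\<chi> i. if i = 1 then a else if i = 2 then b else if i = 3 then c else d)" for a b c d
  have "std_form N (pt a b c d) = 0" for a b c d using assms by blast
  note at = this[unfolded std_form_expand, simplified pt_def, simplified]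
  have "N$2$2 = 0" "N$3$3 = 0" "N$1$1 = 0"
    using at[of 0 0 1 0] at[of 0 0 0 1] at[of 1 1 0 0] by simp_all
  moreover have "N$1$2 = 0" "N$1$3 = 0" "N$2$1 = 0" "N$3$1 = 0" "N$3$2 = - N$2$3"
    using at[of 1 0 1 0] at[of 1 0 0 1] at[of 0 1 1 0] at[of 0 1 0 1] at[of 0 0 1 1] calculation
    by (simp_all add: eq_neg_iff_add_eq_0 add.commute)
  ultimately show ?thesis by (intro exI[of _ "N$2$3"]) (simp add: forall_3)
qed

lemma std_form_kernel_mspan1:
  assumes "\<And>x. std_form N x = 0" and "\<And>x. std_form N' x = 0" and "N' \<noteq> 0"
  shows "N \<in> mspan1 N'"
proof -
  obtain k k' where
    k: "\<And>i j. N$i$j = (if i = 2 \<and> j = 3 then k else if i = 3 \<and> j = 2 then - k else 0)" and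
    k': "\<And>i j. N'$i$j = (if i = 2 \<and> j = 3 then k' else if i = 3 \<and> j = 2 then - k' else 0)"
    using std_form_kernel[OF assms(1)] std_form_kernel[OF assms(2)] by blast
  have "k' \<noteq> 0" using assms(3) by (auto simp: vec_eq_iff k' split: if_splits)
  then have "N = (\<chi> i j. (k / k') * N'$i$j)" by (simp add: vec_eq_iff k k')
  then show ?thesis unfolding mspan1_def by blast
qed

lemma std_form_onto:
  assumes "S$1$1 = 0" and "S$2$2 = 0"
  shows "\<exists>N. \<forall>x. std_form N x = quad_form S x"
proof -
  \<comment> \<open>match the monomials of \<open>std_form_expand\<close>; only x1^2 and x2^2 are missing there\<close>
  define N :: "complex^3^3" where "N = (\<chi> i j.
     if i = 1 then (if j = 1 then S$1$2 + S$2$1 else if j = 2 then S$1$3 + S$3$1 else S$1$4 + S$4$1)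
     else if i = 2 then (if j = 1 then S$2$3 + S$3$2 else if j = 2 then S$3$3 else S$3$4 + S$4$3)
     else (if j = 1 then S$2$4 + S$4$2 else if j = 2 then 0 else S$4$4))"
  have "std_form N x = quad_form S x" for x
    unfolding std_form_expand quad_form_def sum_4 using assms by (simp add: N_def algebra_simps)
  then show ?thesis by blast
qed

section \<open>Reduction to the coordinate projections\<close>

lemma qM_normal_form:
  fixes A1 A2 :: "complex^4^3" and c1 c2 :: "complex^4"
  assumes "rank A1 = 3" and "rank A2 = 3" and "A1 *v c1 = 0" and "A2 *v c2 = 0"
    and "c2 \<noteq> 0" and "\<forall>k. c1 \<noteq> k *s c2"
  obtains P B1 B2 where "invertible P" "invertible B1" "invertible B2"
    and "column 1 P = c1" "column 2 P = c2"
    and "\<And>M x. qM A1 A2 M (P *v x) = std_form (transpose B2 ** M ** B1) x"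
proof -
  obtain P :: "complex^4^4" where P: "invertible P" "column 1 P = c1" "column 2 P = c2"
    using exists_invertible_with_columns[OF assms(5,6)] by blast
  obtain B1 where B1: "invertible B1" "\<And>x. A1 *v (P *v x) = B1 *v (\<chi> j. x$skip1 j)"
    using projection_normal_form[OF surj_matrix_vector_mult_if_rank P(1) _ bij_skip1] assms(1,3) P(2)
    by auto
  obtain B2 where B2: "invertible B2" "\<And>x. A2 *v (P *v x) = B2 *v (\<chi> j. x$skip2 j)"
    using projection_normal_form[OF surj_matrix_vector_mult_if_rank P(1) _ bij_skip2] assms(2,4) P(3)
    by auto
  have "qM A1 A2 M (P *v x) = std_form (transpose B2 ** M ** B1) x" for M x
    unfolding qM_def std_form_def B1(2) B2(2) by (rule bil_matrix_vector_mult)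
  with P B1(1) B2(1) show thesis using that by blast
qed

context
  fixes A1 A2 :: "complex^4^3" and c1 c2 :: "complex^4"
  assumes rank: "rank A1 = 3" "rank A2 = 3" and centers: "A1 *v c1 = 0" "A2 *v c2 = 0"
    and distinct_centers: "c2 \<noteq> 0" "\<forall>k. c1 \<noteq> k *s c2"
begin

lemma qM_kernel_subset_mspan1:
  assumes "\<And>p. qM A1 A2 M p = 0" and "\<And>p. qM A1 A2 F p = 0" and "F \<noteq> 0"
  shows "M \<in> mspan1 F"
proof -
  obtain P B1 B2 where B: "invertible B1" "invertible B2"
    and normal: "\<And>M x. qM A1 A2 M (P *v x) = std_form (transpose B2 ** M ** B1) x"
    using qM_normal_form[OF rank centers distinct_centers] by metis
  let ?C = "\<lambda>X. transpose B2 ** X ** B1"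
  have "?C F \<noteq> 0"
    using congruence_cancel[OF B, of F 0] assms(3) by auto
  then have "?C M \<in> mspan1 (?C F)"
    using std_form_kernel_mspan1 normal assms(1,2) by metis
  then obtain a where "?C M = ?C (\<chi> i j. a * F$i$j)"
    unfolding mspan1_def by (auto simp: matrix_mult_scaled_middle)
  then have "M = (\<chi> i j. a * F$i$j)" by (rule congruence_cancel[OF B])
  then show ?thesis unfolding mspan1_def by blast
qed

lemma quadric_through_centers_eq_qM:
  assumes "is_quadric q" and "q c1 = 0" and "q c2 = 0"
  shows "\<exists>M. \<forall>p. q p = qM A1 A2 M p"
proof -
  obtain P B1 B2 where B: "invertible B1" "invertible B2" and P: "invertible P"
    and columns: "column 1 P = c1" "column 2 P = c2"
    and normal: "\<And>M x. qM A1 A2 M (P *v x) = std_form (transpose B2 ** M ** B1) x"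
    using qM_normal_form[OF rank centers distinct_centers] by metis
  obtain S where S: "\<And>p. q p = quad_form S p" using assms(1) unfolding is_quadric_def by blast
  define S' where "S' = transpose P ** S ** P"
  have S': "quad_form S' x = q (P *v x)" for x
    unfolding S'_def S quad_form_matrix_vector_mult ..
  have "S'$1$1 = 0" "S'$2$2 = 0"
    using S'[of "axis 1 1"] S'[of "axis 2 1"] assms(2,3) columns
    by (simp_all add: quad_form_axis matrix_vector_mult_axis)
  then obtain N where N: "\<And>x. std_form N x = quad_form S' x" using std_form_onto by blast
  obtain M where M: "transpose B2 ** M ** B1 = N" using congruence_surj[OF B] by blast
  obtain P' where P': "P ** P' = mat 1" using P invertible_def by blast
  have "q p = qM A1 A2 M p" for p
  proof -
    have "q p = q (P *v (P' *v p))" by (simp add: matrix_vector_mul_assoc P')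
    also have "\<dots> = qM A1 A2 M (P *v (P' *v p))" by (simp add: normal M N S')
    finally show ?thesis by (simp add: matrix_vector_mul_assoc P')
  qed
  then show ?thesis by blast
qed

end

theorem mainTheorem11:
  fixes A1 A2 :: "complex^4^3" and c1 c2 :: "complex^4" and F :: "complex^3^3"
  assumes rk1: "rank A1 = 3" and rk2: "rank A2 = 3"
    and c1: "c1 \<noteq> 0" "A1 *v c1 = 0"
    and c2: "c2 \<noteq> 0" "A2 *v c2 = 0"
    and c12: "\<forall>k::complex. c1 \<noteq> k *s c2"
    and rkF: "rank F = 2"
    and fund: "\<forall>p. bil (A2 *v p) F (A1 *v p) = 0"
  shows
    "(\<forall>L. line_through F L \<longrightarrow>
        (\<forall>M\<in>L - mspan1 F. is_quadric (qM A1 A2 M) \<and> qM A1 A2 M c1 = 0 \<and> qM A1 A2 M c2 = 0) \<and>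
        (\<forall>M\<in>L - mspan1 F. \<forall>M'\<in>L - mspan1 F. same_quadric (qM A1 A2 M) (qM A1 A2 M'))) \<and>
     (\<forall>L L' M M'. line_through F L \<and> line_through F L' \<and> M \<in> L - mspan1 F \<and> M' \<in> L' - mspan1 F \<and>
        same_quadric (qM A1 A2 M) (qM A1 A2 M') \<longrightarrow> L = L') \<and>
     (\<forall>q. is_quadric q \<and> q c1 = 0 \<and> q c2 = 0 \<longrightarrow>
        (\<exists>L. line_through F L \<and> (\<exists>M\<in>L - mspan1 F. same_quadric q (qM A1 A2 M))))"
proof -
  \<comment> \<open>c1 \<noteq> 0 follows from c12, and rank F = 2 is only needed for F \<noteq> 0\<close>
  note setting = rk1 rk2 c1(2) c2(2) c2(1) c12
  have "F \<noteq> 0" using rkF by (auto simp: rank_zero)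
  interpret kernel_line_map "qM A1 A2" F
  proof
    show "qM A1 A2 F p = 0" for p using fund by (simp add: qM_def)
    show "M \<in> mspan1 F" if "\<And>p. qM A1 A2 M p = 0" for M
      using qM_kernel_subset_mspan1[OF setting that] fund \<open>F \<noteq> 0\<close> by (simp add: qM_def)
  qed (rule qM_mlin)
  have quadric: "is_quadric (qM A1 A2 M)" if "M \<notin> mspan1 F" for M
    unfolding is_quadric_def using qM_eq_quad_form \<Phi>_nonzero[OF that] by blast
  have vanish: "qM A1 A2 M c1 = 0" "qM A1 A2 M c2 = 0" for M
    by (simp_all add: qM_def bil_def c1(2) c2(2))
  show ?thesis
  proof (intro conjI allI impI ballI)
    show "same_quadric (qM A1 A2 M) (qM A1 A2 M')"
      if "line_through F L" "M \<in> L - mspan1 F" "M' \<in> L - mspan1 F" for L M M'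
      using same_quadric_on_line that by blast
    show "L = L'" if "line_through F L \<and> line_through F L' \<and> M \<in> L - mspan1 F \<and>
        M' \<in> L' - mspan1 F \<and> same_quadric (qM A1 A2 M) (qM A1 A2 M')" for L L' M M'
      using line_eq_if_same_quadric that by blast
    show "\<exists>L. line_through F L \<and> (\<exists>M\<in>L - mspan1 F. same_quadric q (qM A1 A2 M))"
      if "is_quadric q \<and> q c1 = 0 \<and> q c2 = 0" for q
      using quadric_through_centers_eq_qM[OF setting] exists_line_through_with_quadric that unfolding is_quadric_def by meson
  qed (use quadric vanish in auto)
qed

end
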